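(* Let $n\ge1$, $C>0$ and $D<0$ be integers. Then there is a one-to-one correspondence between the set of integers $m$ with $0\le m<2nC$ and $m^2\equiv D\pmod{4nC}$, and the set of $\Gamma_0(n)$-orbits in $\mathcal{Q}_n(C,D)$.
   Context: $\mathcal{Q}_n(C,D)$ is the set of triples $(Q;r,t)$ where $Q(x,y)=n\alpha x^2+\beta xy+\gamma y^2$ with $\alpha,\beta,\gamma\in\mathbb{Z}$, $\alpha,\gamma>0$, discriminant $\beta^2-4n\alpha\gamma=D$, and $r,t$ are integers with $n\mid t$, $\gcd(r,t)=1$ and $Q(r,t)=nC$. $\Gamma_0(n)=\{\left(\begin{smallmatrix}a&b\\c&d\end{smallmatrix}\right)\in\mathrm{SL}_2(\mathbb{Z}): n\mid c\}$ acts on $\mathcal{Q}_n(C,D)$ by sending $(Q;r,t)$ to $(Q';dr-bt,-cr+at)$ where $Q'(x,y)=Q(ax+by,cx+dy)$. *)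

theory Defs
  imports Main "HOL-Number_Theory.Cong"
begin

text \<open>A triple (Q;r,t) with Q(x,y) = n*alpha*x^2 + beta*x*y + gamma*y^2 is encoded
  as the tuple (alpha, beta, gamma, r, t) of integers.\<close>

type_synonym triple = "int \<times> int \<times> int \<times> int \<times> int"

definition qform :: "int \<Rightarrow> int \<Rightarrow> int \<Rightarrow> int \<Rightarrow> int \<Rightarrow> int \<Rightarrow> int" where
  "qform n \<alpha> \<beta> \<gamma> x y = n * \<alpha> * x^2 + \<beta> * x * y + \<gamma> * y^2"

definition Qn :: "int \<Rightarrow> int \<Rightarrow> int \<Rightarrow> triple set" where
  "Qn n C D = {(\<alpha>, \<beta>, \<gamma>, r, t). \<alpha> > 0 \<and> \<gamma> > 0 \<and> \<beta>^2 - 4 * n * \<alpha> * \<gamma> = D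
      \<and> n dvd t \<and> gcd r t = 1 \<and> qform n \<alpha> \<beta> \<gamma> r t = n * C}"

definition Gamma0 :: "int \<Rightarrow> (int \<times> int \<times> int \<times> int) set" where
  "Gamma0 n = {(a, b, c, d). a * d - b * c = 1 \<and> n dvd c}"

text \<open>Action: Q'(x,y) = Q(ax+by, cx+dy). Its x^2 coefficient is
  n*alpha*a^2 + beta*a*c + gamma*c^2, which is divisible by n because n divides c,
  so alpha' is that coefficient divided by n.\<close>
definition act :: "int \<Rightarrow> int \<times> int \<times> int \<times> int \<Rightarrow> triple \<Rightarrow> triple" where
  "act n g q = (case g of (a, b, c, d) \<Rightarrow> case q of (\<alpha>, \<beta>, \<gamma>, r, t) \<Rightarrow>
     ((n * \<alpha> * a^2 + \<beta> * a * c + \<gamma> * c^2) div n,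
      2 * n * \<alpha> * a * b + \<beta> * (a * d + b * c) + 2 * \<gamma> * c * d,
      n * \<alpha> * b^2 + \<beta> * b * d + \<gamma> * d^2,
      d * r - b * t,
      - c * r + a * t))"

definition orbit :: "int \<Rightarrow> triple \<Rightarrow> triple set" where
  "orbit n q = (\<lambda>g. act n g q) ` Gamma0 n"

definition orbits :: "int \<Rightarrow> int \<Rightarrow> int \<Rightarrow> triple set set" where
  "orbits n C D = orbit n ` Qn n C D"

end

theory Submission
  imports Defs
begin

text \<open>Every triple in \<open>Qn n C D\<close> can be moved by \<open>\<Gamma>\<^sub>0(n)\<close> to one with \<open>(r, t) = (1, 0)\<close>:
  complete the primitive column \<open>(r, t)\<close> to a matrix of \<open>\<Gamma>\<^sub>0(n)\<close> (possible as \<open>n\<close> divides \<open>t\<close>).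
  Then \<open>\<alpha> = C\<close>, and the discriminant determines \<open>\<gamma>\<close> from \<open>\<beta>\<close>. The matrices of \<open>\<Gamma>\<^sub>0(n)\<close> fixing
  \<open>(1, 0)\<close> are the translations \<open>(1 k; 0 1)\<close>, which shift \<open>\<beta>\<close> by \<open>2nCk\<close>; so the orbit is
  determined by \<open>\<beta> mod 2nC\<close>, a square root of \<open>D\<close> modulo \<open>4nC\<close>.\<close>

definition mat_mult :: "int \<times> int \<times> int \<times> int \<Rightarrow> int \<times> int \<times> int \<times> int \<Rightarrow> int \<times> int \<times> int \<times> int" where
  "mat_mult g h = (case g of (a, b, c, d) \<Rightarrow> case h of (a', b', c', d') \<Rightarrow>
     (a*a' + b*c', a*b' + b*d', c*a' + d*c', c*b' + d*d'))"

lemma mult_div_cancel_first_coeff: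
  fixes n a c \<alpha> \<beta> \<gamma> :: int
  assumes "n dvd c"
  shows "n * ((n*\<alpha>*a^2 + \<beta>*a*c + \<gamma>*c^2) div n) = n*\<alpha>*a^2 + \<beta>*a*c + \<gamma>*c^2"
proof -
  have "n dvd n*\<alpha>*a^2 + \<beta>*a*c + \<gamma>*c^2"
    using assms by (simp add: power2_eq_square)
  then show ?thesis by simp
qed

lemma act_mat_mult:
  fixes n :: int
  assumes "n \<noteq> 0" "g \<in> Gamma0 n" "h \<in> Gamma0 n"
  shows "act n h (act n g q) = act n (mat_mult g h) q"
proof -
  obtain a b c d where g: "g = (a, b, c, d)" by (cases g) auto
  obtain a' b' c' d' where h: "h = (a', b', c', d')" by (cases h) auto
  obtain \<alpha> \<beta> \<gamma> r t where q: "q = (\<alpha>, \<beta>, \<gamma>, r, t)" by (cases q) auto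
  have "n dvd c" using assms(2) g by (simp add: Gamma0_def)
  define A where "A = (n*\<alpha>*a^2 + \<beta>*a*c + \<gamma>*c^2) div n"
  define B where "B = 2*n*\<alpha>*a*b + \<beta>*(a*d + b*c) + 2*\<gamma>*c*d"
  define G where "G = n*\<alpha>*b^2 + \<beta>*b*d + \<gamma>*d^2"
  have nA: "n * A = n*\<alpha>*a^2 + \<beta>*a*c + \<gamma>*c^2"
    unfolding A_def using mult_div_cancel_first_coeff[OF \<open>n dvd c\<close>] .
  have "n*A*a'^2 + B*a'*c' + G*c'^2
      = n*\<alpha>*(a*a' + b*c')^2 + \<beta>*(a*a' + b*c')*(c*a' + d*c') + \<gamma>*(c*a' + d*c')^2"
    unfolding nA B_def G_def by (simp add: algebra_simps power2_eq_square)
  moreover have "2*(n*A)*a'*b' + B*(a'*d' + b'*c') + 2*G*c'*d'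
      = 2*n*\<alpha>*(a*a' + b*c')*(a*b' + b*d')
        + \<beta>*((a*a' + b*c')*(c*b' + d*d') + (a*b' + b*d')*(c*a' + d*c'))
        + 2*\<gamma>*(c*a' + d*c')*(c*b' + d*d')"
    unfolding nA B_def G_def by (simp add: algebra_simps power2_eq_square)
  moreover have "n*A*b'^2 + B*b'*d' + G*d'^2
      = n*\<alpha>*(a*b' + b*d')^2 + \<beta>*(a*b' + b*d')*(c*b' + d*d') + \<gamma>*(c*b' + d*d')^2"
    unfolding nA B_def G_def by (simp add: algebra_simps power2_eq_square)
  ultimately show ?thesis
    unfolding g h q act_def mat_mult_def
    by (simp only: prod.case flip: A_def B_def G_def) (simp add: algebra_simps)
qed

lemma mat_mult_Gamma0:
  assumes "g \<in> Gamma0 n" "h \<in> Gamma0 n"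
  shows "mat_mult g h \<in> Gamma0 n"
proof -
  obtain a b c d where g: "g = (a, b, c, d)" by (cases g) auto
  obtain a' b' c' d' where h: "h = (a', b', c', d')" by (cases h) auto
  have "(a*a' + b*c')*(c*b' + d*d') - (a*b' + b*d')*(c*a' + d*c') = (a*d - b*c)*(a'*d' - b'*c')"
    by (simp add: algebra_simps)
  then show ?thesis using assms unfolding g h mat_mult_def Gamma0_def by auto
qed

lemma act_one:
  assumes "n \<noteq> 0"
  shows "act n (1, 0, 0, 1) q = q"
  using assms by (cases q) (auto simp: act_def)

lemma one_Gamma0: "(1, 0, 0, 1) \<in> Gamma0 n"
  by (simp add: Gamma0_def)

lemma act_mem_orbit:
  assumes "g \<in> Gamma0 n"
  shows "act n g q \<in> orbit n q"
  unfolding orbit_def using assms by (rule imageI)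

lemma mem_orbit_self:
  assumes "n \<noteq> 0"
  shows "q \<in> orbit n q"
  using act_mem_orbit[OF one_Gamma0, of n q] act_one[OF assms] by simp

lemma orbit_act:
  assumes "n \<noteq> 0" "g \<in> Gamma0 n"
  shows "orbit n (act n g q) = orbit n q"
proof
  show "orbit n (act n g q) \<subseteq> orbit n q"
    unfolding orbit_def using act_mat_mult[OF assms] mat_mult_Gamma0[OF assms(2)] by auto
next
  obtain a b c d where g: "g = (a, b, c, d)" by (cases g) auto
  define g' where "g' = (d, -b, -c, a)"
  have g': "g' \<in> Gamma0 n" using assms(2) by (simp add: g g'_def Gamma0_def algebra_simps)
  have "mat_mult g g' = (1, 0, 0, 1)"
    using assms(2) by (simp add: g g'_def mat_mult_def Gamma0_def algebra_simps)
  then have q: "q = act n g' (act n g q)"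
    using act_mat_mult[OF assms g'] act_one[OF assms(1)] by simp
  show "orbit n q \<subseteq> orbit n (act n g q)"
  proof
    fix x assume "x \<in> orbit n q"
    then obtain h where h: "h \<in> Gamma0 n" "x = act n h q" by (auto simp: orbit_def)
    then have "x = act n (mat_mult g' h) (act n g q)"
      using q act_mat_mult[OF assms(1) g' h(1)] by metis
    then show "x \<in> orbit n (act n g q)"
      unfolding orbit_def using mat_mult_Gamma0[OF g' h(1)] by auto
  qed
qed

lemma orbit_eq_iff:
  assumes "n \<noteq> 0"
  shows "orbit n q' = orbit n q \<longleftrightarrow> q' \<in> orbit n q"
proof
  assume "orbit n q' = orbit n q"
  then show "q' \<in> orbit n q" using mem_orbit_self[OF assms, of q'] by simp
next
  assume "q' \<in> orbit n q"
  then obtain g where "g \<in> Gamma0 n" "q' = act n g q" by (auto simp: orbit_def)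
  then show "orbit n q' = orbit n q" using orbit_act[OF assms] by simp
qed

lemma orbit_trans:
  assumes "n \<noteq> 0" "q' \<in> orbit n q" "q'' \<in> orbit n q'"
  shows "q'' \<in> orbit n q"
  using assms(2,3) orbit_eq_iff[OF assms(1)] by blast

lemma act_first_coeff_discriminant:
  fixes n :: int
  assumes "n \<noteq> 0" "(a, b, c, d) \<in> Gamma0 n"
    and "act n (a, b, c, d) (\<alpha>, \<beta>, \<gamma>, r, t) = (\<alpha>', \<beta>', \<gamma>', r', t')"
  shows "n * \<alpha>' = qform n \<alpha> \<beta> \<gamma> a c"
    and "\<beta>'^2 - 4*n*\<alpha>'*\<gamma>' = \<beta>^2 - 4*n*\<alpha>*\<gamma>"
proof -
  have det: "a*d - b*c = 1" and "n dvd c" using assms(2) by (auto simp: Gamma0_def)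
  have \<beta>': "\<beta>' = 2*n*\<alpha>*a*b + \<beta>*(a*d + b*c) + 2*\<gamma>*c*d"
    and \<gamma>': "\<gamma>' = n*\<alpha>*b^2 + \<beta>*b*d + \<gamma>*d^2"
    using assms(3) by (auto simp: act_def)
  have n\<alpha>': "n * \<alpha>' = n*\<alpha>*a^2 + \<beta>*a*c + \<gamma>*c^2"
    using assms(3) mult_div_cancel_first_coeff[OF \<open>n dvd c\<close>] by (auto simp: act_def)
  then show "n * \<alpha>' = qform n \<alpha> \<beta> \<gamma> a c" by (simp add: qform_def)
  have "\<beta>'^2 - 4*(n*\<alpha>')*\<gamma>' = (a*d - b*c)^2 * (\<beta>^2 - 4*n*\<alpha>*\<gamma>)"
    unfolding n\<alpha>' \<beta>' \<gamma>' by (simp add: algebra_simps power2_eq_square)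
  then show "\<beta>'^2 - 4*n*\<alpha>'*\<gamma>' = \<beta>^2 - 4*n*\<alpha>*\<gamma>" using det by (simp add: mult.assoc)
qed

lemma act_translation:
  assumes "n \<noteq> 0"
  shows "act n (1, k, 0, 1) (\<alpha>, \<beta>, \<gamma>, r, t) = (\<alpha>, \<beta> + 2*n*\<alpha>*k, qform n \<alpha> \<beta> \<gamma> k 1, r - k*t, t)"
  using assms by (simp add: act_def qform_def algebra_simps)

lemma translation_Gamma0: "(1, k, 0, 1) \<in> Gamma0 n"
  by (simp add: Gamma0_def)

lemma act_fixing_infinity:
  assumes "g \<in> Gamma0 n" "act n g (\<alpha>, \<beta>, \<gamma>, 1, 0) = (\<alpha>', \<beta>', \<gamma>', 1, 0)"
  shows "\<exists>k. g = (1, k, 0, 1)"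
proof -
  obtain a b c d where g: "g = (a, b, c, d)" by (cases g) auto
  have "d = 1" "c = 0" using assms(2) by (auto simp: g act_def)
  moreover have "a*d - b*c = 1" using assms(1) by (simp add: g Gamma0_def)
  ultimately show ?thesis by (simp add: g)
qed

lemma Qn_orbit_contains_normal:
  assumes "n \<noteq> 0" "q \<in> Qn n C D"
  shows "\<exists>\<beta> \<gamma>. (C, \<beta>, \<gamma>, 1, 0) \<in> orbit n q \<and> \<beta>^2 - 4*n*C*\<gamma> = D"
proof -
  obtain \<alpha> \<beta> \<gamma> r t where q: "q = (\<alpha>, \<beta>, \<gamma>, r, t)" by (cases q) auto
  have disc: "\<beta>^2 - 4*n*\<alpha>*\<gamma> = D" and "n dvd t" "gcd r t = 1" and val: "qform n \<alpha> \<beta> \<gamma> r t = n*C"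
    using assms(2) q by (auto simp: Qn_def)
  obtain u v where uv: "u*r + v*t = 1" using bezout_int[of r t] \<open>gcd r t = 1\<close> by auto
  have g: "(r, -v, t, u) \<in> Gamma0 n" using uv \<open>n dvd t\<close> by (simp add: Gamma0_def algebra_simps)
  obtain \<alpha>' \<beta>' \<gamma>' r' t' where q': "act n (r, -v, t, u) q = (\<alpha>', \<beta>', \<gamma>', r', t')"
    by (cases "act n (r, -v, t, u) q") auto
  note coeffs = act_first_coeff_discriminant[OF assms(1) g q'[unfolded q]]
  have "\<alpha>' = C" using coeffs(1) val assms(1) by simp
  moreover have "r' = 1" "t' = 0" using q' uv by (auto simp: q act_def algebra_simps)
  moreover have "(\<alpha>', \<beta>', \<gamma>', r', t') \<in> orbit n q" using act_mem_orbit[OF g] q' by metis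
  ultimately show ?thesis using coeffs(2) disc by auto
qed

definition reduced_form :: "int \<Rightarrow> int \<Rightarrow> int \<Rightarrow> int \<Rightarrow> triple" where
  "reduced_form n C D m = (C, m, (m^2 - D) div (4*n*C), 1, 0)"

lemma reduced_form_eq:
  assumes "4*n*C \<noteq> 0" "\<beta>^2 - 4*n*C*\<gamma> = D"
  shows "(C, \<beta>, \<gamma>, 1, 0) = reduced_form n C D \<beta>"
proof -
  have "\<beta>^2 - D = (4*n*C) * \<gamma>" using assms(2) by simp
  then show ?thesis using assms(1) by (simp add: reduced_form_def)
qed

lemma reduced_form_in_Qn:
  fixes n C D m :: int
  assumes "n \<ge> 1" "C > 0" "D < 0" "[m^2 = D] (mod (4*n*C))"
  shows "reduced_form n C D m \<in> Qn n C D"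
proof -
  define \<gamma> where "\<gamma> = (m^2 - D) div (4*n*C)"
  have "4*n*C dvd m^2 - D" using assms(4) by (simp add: cong_iff_dvd_diff)
  then have \<gamma>: "4*n*C*\<gamma> = m^2 - D" by (simp add: \<gamma>_def)
  have "m^2 - D > 0" using assms(3) by (smt (verit) zero_le_power2)
  then have "\<gamma> > 0" using \<gamma> assms(1,2) by (smt (verit) mult_pos_pos zero_less_mult_iff)
  then show ?thesis
    using \<gamma> assms(1,2) by (simp add: reduced_form_def \<gamma>_def[symmetric] Qn_def qform_def)
qed

lemma Qn_orbit_contains_reduced_form:
  fixes n C D :: int
  assumes "n \<ge> 1" "C > 0" "q \<in> Qn n C D"
  shows "\<exists>m. 0 \<le> m \<and> m < 2*n*C \<and> [m^2 = D] (mod (4*n*C)) \<and> reduced_form n C D m \<in> orbit n q"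
proof -
  have "n \<noteq> 0" using assms(1) by simp
  obtain \<beta> \<gamma> where normal: "(C, \<beta>, \<gamma>, 1, 0) \<in> orbit n q" and disc: "\<beta>^2 - 4*n*C*\<gamma> = D"
    using Qn_orbit_contains_normal[OF \<open>n \<noteq> 0\<close> assms(3)] by blast
  define N where "N = 2*n*C"
  define m where "m = \<beta> mod N"
  have "N > 0" using assms(1,2) by (simp add: N_def)
  then have m_range: "0 \<le> m" "m < N" by (simp_all add: m_def)
  have m_eq: "m = \<beta> + 2*n*C*(- (\<beta> div N))" by (simp add: m_def N_def minus_div_mult_eq_mod[symmetric])
  define \<gamma>' where "\<gamma>' = qform n C \<beta> \<gamma> (- (\<beta> div N)) 1"
  have act: "act n (1, - (\<beta> div N), 0, 1) (C, \<beta>, \<gamma>, 1, 0) = (C, m, \<gamma>', 1, 0)"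
    using act_translation[OF \<open>n \<noteq> 0\<close>] m_eq by (simp add: \<gamma>'_def)
  then have "m^2 - 4*n*C*\<gamma>' = D"
    using act_first_coeff_discriminant(2)[OF \<open>n \<noteq> 0\<close> translation_Gamma0] disc by metis
  then have "[m^2 = D] (mod (4*n*C))" and "(C, m, \<gamma>', 1, 0) = reduced_form n C D m"
    using assms(1,2) reduced_form_eq[of n C m \<gamma>' D] by (auto simp: cong_iff_dvd_diff)
  moreover have "(C, m, \<gamma>', 1, 0) \<in> orbit n q"
    using orbit_trans[OF \<open>n \<noteq> 0\<close> normal] act_mem_orbit[OF translation_Gamma0] act by metis
  ultimately show ?thesis using m_range by (auto simp: N_def)
qed

lemma eq_of_shift_in_range:
  fixes N x k :: int
  assumes "0 \<le> x" "x < N" "0 \<le> x + N*k" "x + N*k < N"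
  shows "k = 0"
proof -
  have "N*k < N" "N*k > -N" using assms by linarith+
  then have "-1 < k" "k < 1" using assms(1,2) by (smt (verit) mult_less_cancel_left2 mult_minus_right)+
  then show ?thesis by simp
qed

lemma reduced_form_orbit_inj:
  fixes n C D m m' :: int
  assumes "n \<ge> 1" "0 \<le> m" "m < 2*n*C" "0 \<le> m'" "m' < 2*n*C"
    and "reduced_form n C D m' \<in> orbit n (reduced_form n C D m)"
  shows "m = m'"
proof -
  obtain g where g: "g \<in> Gamma0 n" "act n g (reduced_form n C D m) = reduced_form n C D m'"
    using assms(6) by (auto simp: orbit_def)
  then obtain k where "g = (1, k, 0, 1)"
    using act_fixing_infinity by (metis reduced_form_def)
  then have "m' = m + 2*n*C*k"
    using g(2) act_translation[of n] assms(1) by (simp add: reduced_form_def)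
  then show ?thesis using eq_of_shift_in_range[of m "2*n*C" k] assms(2-5) by simp
qed

theorem lemma5:
  fixes n C D :: int
  assumes "n \<ge> 1" and "C > 0" and "D < 0"
  shows "\<exists>f. bij_betw f {m::int. 0 \<le> m \<and> m < 2 * n * C \<and> [m^2 = D] (mod (4 * n * C))}
                       (orbits n C D)"
proof -
  define S where "S = {m::int. 0 \<le> m \<and> m < 2 * n * C \<and> [m^2 = D] (mod (4 * n * C))}"
  define f where "f m = orbit n (reduced_form n C D m)" for m
  have "n \<noteq> 0" using assms(1) by simp
  have "inj_on f S"
  proof (rule inj_onI)
    fix m m' assume "m \<in> S" "m' \<in> S" "f m = f m'"
    then show "m = m'"
      using reduced_form_orbit_inj[OF assms(1)] orbit_eq_iff[OF \<open>n \<noteq> 0\<close>]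
      by (auto simp: S_def f_def)
  qed
  moreover have "f ` S \<subseteq> orbits n C D"
    using reduced_form_in_Qn[OF assms] by (auto simp: S_def f_def orbits_def)
  moreover have "orbits n C D \<subseteq> f ` S"
  proof
    fix X assume "X \<in> orbits n C D"
    then obtain q where q: "q \<in> Qn n C D" "X = orbit n q" by (auto simp: orbits_def)
    then obtain m where "m \<in> S" "reduced_form n C D m \<in> orbit n q"
      using Qn_orbit_contains_reduced_form[OF assms(1,2)] unfolding S_def by blast
    then show "X \<in> f ` S"
      using q(2) orbit_eq_iff[OF \<open>n \<noteq> 0\<close>] unfolding f_def by blast
  qed
  ultimately have "bij_betw f S (orbits n C D)" by (auto simp: bij_betw_def)
  then show ?thesis unfolding S_def by blast
qed

end
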